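(* Let $a\in C^2([0,T]\times[-\pi,\pi])$ solve $$\partial_t a+\Big(\int_{-\pi}^x a(t,\bar x)\,d\bar x\Big)\partial_x a-a^2+\frac1\pi\int_{-\pi}^{\pi}a^2\,dx=0,\qquad \int_{-\pi}^\pi a(t,x)dx=0,$$ and set $a_0=a(0,\cdot)$. Assume $\partial_x a_0(x_0^* )=0$ at some point $x_0^*$. Then for all $t\in[0,T]$, $\partial_x^2a(t,x^*(t))=\partial_x^2a_0(x_0^* )$, where $x^*$ is the characteristic starting from $x_0^*$.
   Context: The characteristic starting from $x_0^*$ is the solution of $\frac{d}{dt}x^*(t)=\int_{-\pi}^{x^*(t)}a(t,x)\,dx$, $x^*(0)=x_0^*$. *)

theory Defs
  imports "HOL-Analysis.Analysis"
begin

definition rect :: "real \<Rightarrow> (real \<times> real) set" where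
  "rect T = {0..T} \<times> {-pi..pi}"

text \<open>Derivatives are Frechet derivatives relative to S
  (one-sided at the boundary); all second order partials exist and are continuous on S.\<close>
definition C2_on :: "(real \<Rightarrow> real \<Rightarrow> real) \<Rightarrow> (real \<Rightarrow> real \<Rightarrow> real) \<Rightarrow>
    (real \<Rightarrow> real \<Rightarrow> real) \<Rightarrow> (real \<Rightarrow> real \<Rightarrow> real) \<Rightarrow> (real \<times> real) set \<Rightarrow> bool" where
  "C2_on a a_t a_x a_xx S \<longleftrightarrow>
     (\<forall>p\<in>S. ((\<lambda>q. a (fst q) (snd q)) has_derivative
               (\<lambda>h. a_t (fst p) (snd p) * fst h + a_x (fst p) (snd p) * snd h)) (at p within S)) \<and>
     (\<exists>a_tt a_tx a_xt.
        (\<forall>p\<in>S. ((\<lambda>q. a_t (fst q) (snd q)) has_derivative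
               (\<lambda>h. a_tt (fst p) (snd p) * fst h + a_tx (fst p) (snd p) * snd h)) (at p within S)) \<and>
        (\<forall>p\<in>S. ((\<lambda>q. a_x (fst q) (snd q)) has_derivative
               (\<lambda>h. a_xt (fst p) (snd p) * fst h + a_xx (fst p) (snd p) * snd h)) (at p within S)) \<and>
        continuous_on S (\<lambda>q. a_tt (fst q) (snd q)) \<and>
        continuous_on S (\<lambda>q. a_tx (fst q) (snd q)) \<and>
        continuous_on S (\<lambda>q. a_xt (fst q) (snd q)) \<and>
        continuous_on S (\<lambda>q. a_xx (fst q) (snd q)))"

end

theory Submission
  imports Defs
begin

text \<open>Let u(t, x), the integral of a(t, -) over [-pi, x], be the velocity of the characteristics.
  Differentiating the equation in x shows that b = a_x solves the transport equation
  b_t + u b_x = a b, so b vanishes along the characteristic x* through the critical point.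
  Since a is only C^2, a_xx cannot be differentiated along x*.  Instead b is followed along the
  curves Y_h(t) = x*(t) + h J(t), where J(t) = exp (integral of a(s, x*(s)) over [0, t]); they
  solve the characteristic equation up to o(h).  The rescaled slope Z_h(t) = b(t, Y_h(t)) / J(t)
  has time derivative o(h) uniformly in t, while Z_h(t) / h tends to a_xx(t, x*(t)) as h tends
  to 0, so a_xx(t, x*(t)) does not depend on t.  The x-derivatives are one-sided at the ends of
  [-pi, pi], so h must have a sign for which Y_h stays inside: positive unless x* touches pi,
  in which case x* stays at pi because u(t, pi) = 0.\<close>

section \<open>Real functions of one variable\<close>

lemma DERIV_within_Icc_vanishing:
  fixes f :: "real \<Rightarrow> real"
  assumes "c < d" "x \<in> {c..d}" "(f has_real_derivative f') (at x within {c..d})"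
    and "\<And>y. y \<in> {c..d} \<Longrightarrow> f y = 0"
  shows "f' = 0"
proof -
  have "((\<lambda>y. 0) has_real_derivative f') (at x within {c..d})"
    by (rule has_field_derivative_transform_within[OF assms(3), where d = 1]) (use assms in auto)
  then show ?thesis
    using vector_derivative_unique_within_closed_interval[of c d x "\<lambda>y. 0" f' 0] assms(1,2)
    by (simp add: has_real_derivative_iff_has_vector_derivative)
qed

lemma DERIV_within_nonneg_imp_le:
  fixes f f' :: "real \<Rightarrow> real"
  assumes "x \<le> y" "{x..y} \<subseteq> S"
    and "\<And>z. z \<in> {x..y} \<Longrightarrow> (f has_real_derivative f' z) (at z within S)"
    and "\<And>z. z \<in> {x..y} \<Longrightarrow> f' z \<ge> 0"
  shows "f x \<le> f y"
proof -
  have "(f has_derivative (\<lambda>h. f' z * h)) (at z within {x..y})" if "z \<in> {x..y}" for z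
    using DERIV_subset[OF assms(3)[OF that] assms(2)] by (simp add: has_field_derivative_def)
  then have "\<exists>z\<in>{x..y}. f y - f x = (\<lambda>h. f' z * h) (y - x)"
    by (intro mvt_very_simple[OF assms(1)]) auto
  then show ?thesis
    using assms(1,4) by (metis diff_ge_0_iff_ge mult_nonneg_nonneg)
qed

lemma gronwall_vanishing:
  fixes d d' :: "real \<Rightarrow> real"
  assumes nonneg: "\<And>s. s \<in> {p..q} \<Longrightarrow> d s \<ge> 0"
    and deriv: "\<And>s. s \<in> {p..q} \<Longrightarrow> (d has_real_derivative d' s) (at s within {p..q})"
    and bound: "\<And>s. s \<in> {p..q} \<Longrightarrow> \<bar>d' s\<bar> \<le> L * d s"
    and zero: "u \<in> {p..q}" "d u = 0"
    and s: "s \<in> {p..q}"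
  shows "d s = 0"
proof (cases "u \<le> s")
  case True
  have "- (d u * exp (- L * u)) \<le> - (d s * exp (- L * s))"
  proof (rule DERIV_within_nonneg_imp_le[where f = "\<lambda>s. - (d s * exp (- L * s))"])
    show "u \<le> s" "{u..s} \<subseteq> {p..q}" using True zero s by auto
    fix z assume z: "z \<in> {u..s}"
    then have "z \<in> {p..q}" using zero s by auto
    then show "((\<lambda>s. - (d s * exp (- L * s))) has_real_derivative
        (L * d z - d' z) * exp (- L * z)) (at z within {p..q})"
      by (auto intro!: derivative_eq_intros deriv simp: algebra_simps)
    show "(L * d z - d' z) * exp (- L * z) \<ge> 0"
      using bound[OF \<open>z \<in> {p..q}\<close>] by simp
  qed
  then show ?thesis
    using zero nonneg[OF s] by (simp add: mult_le_0_iff)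
next
  case False
  have "d s * exp (L * s) \<le> d u * exp (L * u)"
  proof (rule DERIV_within_nonneg_imp_le[where f = "\<lambda>s. d s * exp (L * s)"])
    show "s \<le> u" "{s..u} \<subseteq> {p..q}" using False zero s by auto
    fix z assume z: "z \<in> {s..u}"
    then have "z \<in> {p..q}" using zero s by auto
    then show "((\<lambda>s. d s * exp (L * s)) has_real_derivative
        (d' z + L * d z) * exp (L * z)) (at z within {p..q})"
      by (auto intro!: derivative_eq_intros deriv simp: algebra_simps)
    show "(d' z + L * d z) * exp (L * z) \<ge> 0"
      using bound[OF \<open>z \<in> {p..q}\<close>] by simp
  qed
  then show ?thesis
    using zero nonneg[OF s] by (simp add: mult_le_0_iff)
qed

lemma DERIV_within_imp_continuous_on:
  fixes f :: "real \<Rightarrow> real"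
  assumes "\<And>x. x \<in> S \<Longrightarrow> (f has_real_derivative f' x) (at x within S)"
  shows "continuous_on S f"
  using assms DERIV_continuous continuous_on_eq_continuous_within by blast

lemma integral_linearization_bound:
  fixes g :: "real \<Rightarrow> real"
  assumes g: "continuous_on {c..d} g" and y: "y \<in> {c..d}" and Y: "Y \<in> {c..d}"
    and close: "\<And>z. z \<in> closed_segment y Y \<Longrightarrow> \<bar>g z - g y\<bar> \<le> \<epsilon>"
  shows "\<bar>integral {c..Y} g - integral {c..y} g - (Y - y) * g y\<bar> \<le> \<epsilon> * \<bar>Y - y\<bar>"
proof -
  have seg: "closed_segment y Y \<subseteq> {c..d}"
    using closed_segment_subset[OF y Y] by simp
  have "((\<lambda>z. integral {c..z} g - z * g y) has_real_derivative g z - g y) (at z within closed_segment y Y)"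
    if "z \<in> closed_segment y Y" for z
    using seg that
    by (auto intro!: derivative_eq_intros DERIV_subset[OF integral_has_real_derivative[OF g]])
  then have "norm ((integral {c..Y} g - Y * g y) - (integral {c..y} g - y * g y)) \<le> \<epsilon> * norm (Y - y)"
    by (rule field_differentiable_bound[OF convex_closed_segment]) (use close in auto)
  then show ?thesis
    by (simp add: algebra_simps)
qed

lemma double_difference_bound:
  fixes f f_t f_tx :: "real \<Rightarrow> real \<Rightarrow> real"
  assumes "t1 \<le> t2" "x1 \<le> x2"
    and f_t: "\<And>s x. s \<in> {t1..t2} \<Longrightarrow> x \<in> {x1..x2} \<Longrightarrow>
      ((\<lambda>s. f s x) has_real_derivative f_t s x) (at s within {t1..t2})"
    and f_tx: "\<And>s x. s \<in> {t1..t2} \<Longrightarrow> x \<in> {x1..x2} \<Longrightarrow>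
      (f_t s has_real_derivative f_tx s x) (at x within {x1..x2})"
    and close: "\<And>s x. s \<in> {t1..t2} \<Longrightarrow> x \<in> {x1..x2} \<Longrightarrow> \<bar>f_tx s x - c\<bar> \<le> \<epsilon>"
  shows "\<bar>f t2 x2 - f t2 x1 - f t1 x2 + f t1 x1 - c * (t2 - t1) * (x2 - x1)\<bar>
    \<le> \<epsilon> * (t2 - t1) * (x2 - x1)"
proof -
  have inner: "\<bar>f_t s x2 - f_t s x1 - c * (x2 - x1)\<bar> \<le> \<epsilon> * (x2 - x1)"
    if s: "s \<in> {t1..t2}" for s
  proof -
    have "((\<lambda>x. f_t s x - c * x) has_real_derivative f_tx s x - c) (at x within {x1..x2})"
      if "x \<in> {x1..x2}" for x
      using s that by (auto intro!: derivative_eq_intros f_tx)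
    then have "\<bar>(f_t s x2 - c * x2) - (f_t s x1 - c * x1)\<bar> \<le> \<epsilon> * \<bar>x2 - x1\<bar>"
      using field_differentiable_bound[of "{x1..x2}" _ "\<lambda>x. f_tx s x - c" \<epsilon> x2 x1] assms(2) s close
      by auto
    then show ?thesis
      using assms(2) by (simp add: algebra_simps)
  qed
  have "((\<lambda>s. f s x2 - f s x1 - c * (x2 - x1) * s) has_real_derivative
      f_t s x2 - f_t s x1 - c * (x2 - x1)) (at s within {t1..t2})" if "s \<in> {t1..t2}" for s
    using that assms(2) by (auto intro!: derivative_eq_intros f_t)
  then have "\<bar>(f t2 x2 - f t2 x1 - c * (x2 - x1) * t2) - (f t1 x2 - f t1 x1 - c * (x2 - x1) * t1)\<bar>
      \<le> \<epsilon> * (x2 - x1) * \<bar>t2 - t1\<bar>"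
    using field_differentiable_bound[of "{t1..t2}" _ "\<lambda>s. f_t s x2 - f_t s x1 - c * (x2 - x1)"
        "\<epsilon> * (x2 - x1)" t2 t1] assms(1) inner
    by auto
  moreover have "f t2 x2 - f t2 x1 - f t1 x2 + f t1 x1 - c * (t2 - t1) * (x2 - x1) =
      (f t2 x2 - f t2 x1 - c * (x2 - x1) * t2) - (f t1 x2 - f t1 x1 - c * (x2 - x1) * t1)"
    by (simp add: algebra_simps)
  ultimately show ?thesis
    using assms(1) by (simp add: mult_ac)
qed

section \<open>Partial derivatives on subsets of the plane\<close>

definition has_partials :: "(real \<Rightarrow> real \<Rightarrow> real) \<Rightarrow> (real \<Rightarrow> real \<Rightarrow> real) \<Rightarrow>
    (real \<Rightarrow> real \<Rightarrow> real) \<Rightarrow> (real \<times> real) set \<Rightarrow> bool" where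
  "has_partials g g_t g_x S \<longleftrightarrow>
     (\<forall>p\<in>S. ((\<lambda>q. g (fst q) (snd q)) has_derivative
               (\<lambda>h. g_t (fst p) (snd p) * fst h + g_x (fst p) (snd p) * snd h)) (at p within S))"

lemma C2_onE:
  assumes "C2_on a a_t a_x a_xx S"
  obtains a_tt a_tx a_xt where
    "has_partials a a_t a_x S" "has_partials a_t a_tt a_tx S" "has_partials a_x a_xt a_xx S"
    "continuous_on S (\<lambda>q. a_tx (fst q) (snd q))" "continuous_on S (\<lambda>q. a_xt (fst q) (snd q))"
    "continuous_on S (\<lambda>q. a_xx (fst q) (snd q))"
  using assms unfolding C2_on_def has_partials_def by blast

lemma has_partials_continuous_on:
  assumes "has_partials g g_t g_x S"
  shows "continuous_on S (\<lambda>q. g (fst q) (snd q))"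
  using assms has_derivative_continuous continuous_on_eq_continuous_within
  unfolding has_partials_def by blast

lemma has_partials_chain:
  assumes g: "has_partials g g_t g_x S" and J: "(\<lambda>s. (s, \<gamma> s)) ` J \<subseteq> S" "s \<in> J"
    and \<gamma>: "(\<gamma> has_real_derivative \<gamma>') (at s within J)"
  shows "((\<lambda>s. g s (\<gamma> s)) has_real_derivative g_t s (\<gamma> s) + g_x s (\<gamma> s) * \<gamma>') (at s within J)"
proof -
  have "((\<lambda>s. (s, \<gamma> s)) has_derivative (\<lambda>h. (h, \<gamma>' * h))) (at s within J)"
    using has_derivative_Pair[OF has_derivative_ident \<gamma>[unfolded has_field_derivative_def]] by simp
  from has_derivative_in_compose2[OF _ J this, of "\<lambda>q. g (fst q) (snd q)"
      "\<lambda>p h. g_t (fst p) (snd p) * fst h + g_x (fst p) (snd p) * snd h"]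
  have "((\<lambda>s. g s (\<gamma> s)) has_derivative (\<lambda>h. g_t s (\<gamma> s) * h + g_x s (\<gamma> s) * (\<gamma>' * h)))
      (at s within J)"
    using g unfolding has_partials_def by auto
  then show ?thesis
    unfolding has_field_derivative_def by (rule has_derivative_eq_rhs) (auto simp: algebra_simps)
qed

lemma has_partials_t:
  assumes "has_partials g g_t g_x S" "(\<lambda>s. (s, x)) ` J \<subseteq> S" "s \<in> J"
  shows "((\<lambda>s. g s x) has_real_derivative g_t s x) (at s within J)"
  using has_partials_chain[of g g_t g_x S "\<lambda>_. x" J s 0] assms by simp

lemma has_partials_x:
  assumes g: "has_partials g g_t g_x S" and J: "(\<lambda>x. (t, x)) ` J \<subseteq> S" "x \<in> J"
  shows "(g t has_real_derivative g_x t x) (at x within J)"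
proof -
  have "((\<lambda>x. (t, x)) has_derivative (\<lambda>h. (0, h))) (at x within J)"
    by (auto intro!: derivative_eq_intros)
  from has_derivative_in_compose2[OF _ J this, of "\<lambda>q. g (fst q) (snd q)"
      "\<lambda>p h. g_t (fst p) (snd p) * fst h + g_x (fst p) (snd p) * snd h"]
  have "(g t has_derivative (\<lambda>h. g_t t x * 0 + g_x t x * h)) (at x within J)"
    using g unfolding has_partials_def by auto
  then show ?thesis
    unfolding has_field_derivative_def by (rule has_derivative_eq_rhs) auto
qed

lemma obtain_small_square:
  fixes t x \<rho> :: real
  assumes "t \<in> {t0..t1}" "x \<in> {x0..x1}" "t0 < t1" "x0 < x1" "\<rho> > 0"
  obtains s0 y0 r where "r > 0" "{s0..s0 + r} \<subseteq> {t0..t1}" "{y0..y0 + r} \<subseteq> {x0..x1}"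
    "\<And>s y. s \<in> {s0..s0 + r} \<Longrightarrow> y \<in> {y0..y0 + r} \<Longrightarrow> dist (s, y) (t, x) < \<rho>"
proof -
  define r where "r = min (\<rho> / 3) (min (t1 - t0) (x1 - x0))"
  have r: "r > 0" "r \<le> t1 - t0" "r \<le> x1 - x0" "3 * r \<le> \<rho>"
    using assms(3-5) by (auto simp: r_def min_def)
  define s0 y0 where "s0 = min t (t1 - r)" and "y0 = min x (x1 - r)"
  have s0: "t0 \<le> s0" "s0 + r \<le> t1" "s0 \<le> t" "t \<le> s0 + r"
    using assms(1) r unfolding s0_def min_def by auto
  have y0: "x0 \<le> y0" "y0 + r \<le> x1" "y0 \<le> x" "x \<le> y0 + r"
    using assms(2) r unfolding y0_def min_def by auto
  show ?thesis
  proof (rule that[of r s0 y0])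
    fix s y assume "s \<in> {s0..s0 + r}" "y \<in> {y0..y0 + r}"
    then have "\<bar>s - t\<bar> \<le> r" "\<bar>y - x\<bar> \<le> r"
      using s0 y0 by (simp_all add: abs_le_iff)
    moreover have "dist (s, y) (t, x) \<le> \<bar>s - t\<bar> + \<bar>y - x\<bar>"
      using sqrt_sum_squares_le_sum_abs by (simp add: dist_Pair_Pair dist_real_def)
    ultimately show "dist (s, y) (t, x) < \<rho>"
      using r by linarith
  qed (use r s0 y0 in auto)
qed

lemma has_partials_mixed_eq:
  fixes g g_t g_x g_tt g_tx g_xt g_xx :: "real \<Rightarrow> real \<Rightarrow> real" and t0 t1 x0 x1 :: real
  defines "B \<equiv> {t0..t1} \<times> {x0..x1}"
  assumes "t0 < t1" "x0 < x1"
    and g: "has_partials g g_t g_x B"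
    and g_t: "has_partials g_t g_tt g_tx B" and g_x: "has_partials g_x g_xt g_xx B"
    and cont: "continuous_on B (\<lambda>q. g_tx (fst q) (snd q))" "continuous_on B (\<lambda>q. g_xt (fst q) (snd q))"
    and t: "t \<in> {t0..t1}" and x: "x \<in> {x0..x1}"
  shows "g_tx t x = g_xt t x"
proof (rule ccontr)
  assume "g_tx t x \<noteq> g_xt t x"
  define \<epsilon> where "\<epsilon> = \<bar>g_tx t x - g_xt t x\<bar> / 4"
  have "\<epsilon> > 0" using \<open>g_tx t x \<noteq> g_xt t x\<close> by (simp add: \<epsilon>_def)
  have tx: "(t, x) \<in> B" using t x by (simp add: B_def)
  obtain \<delta>1 where "\<delta>1 > 0" and \<delta>1: "\<And>q. q \<in> B \<Longrightarrow> dist q (t, x) < \<delta>1 \<Longrightarrow>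
      \<bar>g_tx (fst q) (snd q) - g_tx t x\<bar> < \<epsilon>"
    using cont(1) tx \<open>\<epsilon> > 0\<close> unfolding continuous_on_iff dist_real_def by fastforce
  obtain \<delta>2 where "\<delta>2 > 0" and \<delta>2: "\<And>q. q \<in> B \<Longrightarrow> dist q (t, x) < \<delta>2 \<Longrightarrow>
      \<bar>g_xt (fst q) (snd q) - g_xt t x\<bar> < \<epsilon>"
    using cont(2) tx \<open>\<epsilon> > 0\<close> unfolding continuous_on_iff dist_real_def by fastforce
  have "min \<delta>1 \<delta>2 > 0"
    using \<open>\<delta>1 > 0\<close> \<open>\<delta>2 > 0\<close> by simp
  then obtain s0 y0 r where "r > 0" and square: "{s0..s0 + r} \<subseteq> {t0..t1}" "{y0..y0 + r} \<subseteq> {x0..x1}"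
    and near: "\<And>s y. s \<in> {s0..s0 + r} \<Longrightarrow> y \<in> {y0..y0 + r} \<Longrightarrow> dist (s, y) (t, x) < min \<delta>1 \<delta>2"
    using obtain_small_square[OF t x assms(2,3)] by metis
  have near1: "dist (s, y) (t, x) < \<delta>1" and near2: "dist (s, y) (t, x) < \<delta>2"
    if "s \<in> {s0..s0 + r}" "y \<in> {y0..y0 + r}" for s y
    using near[OF that] by simp_all
  have tslice: "(\<lambda>s. (s, y)) ` {s0..s0 + r} \<subseteq> B" if "y \<in> {y0..y0 + r}" for y
    using square that by (auto simp: B_def)
  have xslice: "(\<lambda>y. (s, y)) ` {y0..y0 + r} \<subseteq> B" if "s \<in> {s0..s0 + r}" for s
    using square that by (auto simp: B_def)
  define D where "D = g (s0 + r) (y0 + r) - g (s0 + r) y0 - g s0 (y0 + r) + g s0 y0"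
  have "\<bar>D - g_tx t x * r * r\<bar> \<le> \<epsilon> * r * r"
    unfolding D_def
    using double_difference_bound[of s0 "s0 + r" y0 "y0 + r" g g_t g_tx "g_tx t x" \<epsilon>] \<open>r > 0\<close>
      has_partials_t[OF g tslice] has_partials_x[OF g_t xslice] \<delta>1 near1 xslice by fastforce
  moreover have "\<bar>D - g_xt t x * r * r\<bar> \<le> \<epsilon> * r * r"
    unfolding D_def
    using double_difference_bound[of y0 "y0 + r" s0 "s0 + r" "\<lambda>y s. g s y" "\<lambda>y s. g_x s y"
        "\<lambda>y s. g_xt s y" "g_xt t x" \<epsilon>] \<open>r > 0\<close>
      has_partials_x[OF g xslice] has_partials_t[OF g_x tslice] \<delta>2 near2 xslice
    by (fastforce simp: algebra_simps)
  moreover have "(g_tx t x - g_xt t x) * (r * r) = (D - g_xt t x * r * r) - (D - g_tx t x * r * r)"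
    by (simp add: algebra_simps)
  then have "\<bar>(g_tx t x - g_xt t x) * (r * r)\<bar> \<le> \<bar>D - g_xt t x * r * r\<bar> + \<bar>D - g_tx t x * r * r\<bar>"
    by (metis abs_triangle_ineq4)
  ultimately have "\<bar>g_tx t x - g_xt t x\<bar> * (r * r) \<le> (2 * \<epsilon>) * (r * r)"
    unfolding abs_mult by simp
  then have "\<bar>g_tx t x - g_xt t x\<bar> \<le> 2 * \<epsilon>"
    using \<open>r > 0\<close> by simp
  then show False
    using \<open>\<epsilon> > 0\<close> by (simp add: \<epsilon>_def)
qed

section \<open>The equation along a characteristic through a critical point\<close>

abbreviation velocity :: "(real \<Rightarrow> real \<Rightarrow> real) \<Rightarrow> real \<Rightarrow> real \<Rightarrow> real" where
  "velocity a t x \<equiv> integral {-pi..x} (a t)"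

lemma continuous_on_slice:
  assumes "continuous_on S (\<lambda>q. g (fst q) (snd q))" "(\<lambda>x. (t, x)) ` J \<subseteq> S"
  shows "continuous_on J (g t)"
  using continuous_on_compose2[OF assms(1) continuous_on_Pair[OF continuous_on_const continuous_on_id]
      assms(2)] by simp

lemma rect_slice_x: "t \<in> {0..T} \<Longrightarrow> (\<lambda>x. (t, x)) ` {-pi..pi} \<subseteq> rect T"
  by (auto simp: rect_def)

lemma compact_rect: "compact (rect T)"
  unfolding rect_def by (intro compact_Times compact_Icc)

lemma rect_bound:
  fixes g :: "real \<Rightarrow> real \<Rightarrow> real"
  assumes "continuous_on (rect T) (\<lambda>q. g (fst q) (snd q))"
  obtains M where "M \<ge> 0" "\<And>t x. t \<in> {0..T} \<Longrightarrow> x \<in> {-pi..pi} \<Longrightarrow> \<bar>g t x\<bar> \<le> M"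
proof -
  obtain M where "M \<ge> 0" and M: "\<And>q. q \<in> rect T \<Longrightarrow> norm (g (fst q) (snd q)) \<le> M"
    using continuous_on_compact_bound[OF compact_rect assms] by blast
  show ?thesis
    using that[OF \<open>M \<ge> 0\<close>] M[of "(t, x)" for t x] by (simp add: rect_def)
qed

lemma transport_of_a_x:
  fixes a a_t a_x a_tt a_tx a_xt a_xx :: "real \<Rightarrow> real \<Rightarrow> real" and c :: "real \<Rightarrow> real"
  assumes "T > 0"
    and a: "has_partials a a_t a_x (rect T)"
    and a_t: "has_partials a_t a_tt a_tx (rect T)" and a_x: "has_partials a_x a_xt a_xx (rect T)"
    and cont: "continuous_on (rect T) (\<lambda>q. a_tx (fst q) (snd q))"
      "continuous_on (rect T) (\<lambda>q. a_xt (fst q) (snd q))"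
    and pde: "\<And>t x. t \<in> {0..T} \<Longrightarrow> x \<in> {-pi..pi} \<Longrightarrow>
      a_t t x + velocity a t x * a_x t x - (a t x)^2 + c t = 0"
    and t: "t \<in> {0..T}" and x: "x \<in> {-pi..pi}"
  shows "a_xt t x = a t x * a_x t x - velocity a t x * a_xx t x"
proof -
  note slice = rect_slice_x[OF t]
  have "continuous_on {-pi..pi} (a t)"
    by (rule continuous_on_slice[OF has_partials_continuous_on[OF a] slice])
  then have "((\<lambda>y. velocity a t y) has_real_derivative a t x) (at x within {-pi..pi})"
    using integral_has_real_derivative x by blast
  then have "((\<lambda>y. a_t t y + velocity a t y * a_x t y - (a t y)^2 + c t) has_real_derivative
      a_tx t x + (a t x * a_x t x + velocity a t x * a_xx t x) - 2 * a t x * a_x t x)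
      (at x within {-pi..pi})"
    using has_partials_x[OF a_t slice x] has_partials_x[OF a_x slice x] has_partials_x[OF a slice x]
    by (auto intro!: derivative_eq_intros simp: algebra_simps)
  then have "a_tx t x + (a t x * a_x t x + velocity a t x * a_xx t x) - 2 * a t x * a_x t x = 0"
    by (rule DERIV_within_Icc_vanishing[of "-pi" pi, rotated 2]) (use x pde t in auto)
  moreover have "a_tx t x = a_xt t x"
    using has_partials_mixed_eq[of 0 T "-pi" pi a a_t a_x a_tt a_tx a_xt a_xx] assms
    unfolding rect_def by simp
  ultimately show ?thesis
    by (simp add: algebra_simps)
qed

text \<open>The equation enters only through its x-derivative, the transport equation for a_x
  (lemma transport_of_a_x); nothing else relates a_x to a.\<close>

locale critical_characteristic =
  fixes a a_x a_xt a_xx :: "real \<Rightarrow> real \<Rightarrow> real" and T x0 :: real and xs :: "real \<Rightarrow> real"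
  assumes T_pos: "T > 0"
    and a_cont: "continuous_on (rect T) (\<lambda>q. a (fst q) (snd q))"
    and a_x: "has_partials a_x a_xt a_xx (rect T)"
    and a_xx_cont: "continuous_on (rect T) (\<lambda>q. a_xx (fst q) (snd q))"
    and transport: "\<And>t x. t \<in> {0..T} \<Longrightarrow> x \<in> {-pi..pi} \<Longrightarrow>
      a_xt t x = a t x * a_x t x - velocity a t x * a_xx t x"
    and mean_zero: "\<And>t. t \<in> {0..T} \<Longrightarrow> integral {-pi..pi} (a t) = 0"
    and crit: "a_x 0 x0 = 0"
    and char_range: "\<And>t. t \<in> {0..T} \<Longrightarrow> xs t \<in> {-pi..pi}"
    and char_init: "xs 0 = x0"
    and char_ode: "\<And>t. t \<in> {0..T} \<Longrightarrow>
      (xs has_real_derivative velocity a t (xs t)) (at t within {0..T})"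
begin

lemma velocity_deriv:
  assumes "t \<in> {0..T}" "x \<in> {-pi..pi}"
  shows "((\<lambda>y. velocity a t y) has_real_derivative a t x) (at x within {-pi..pi})"
  using integral_has_real_derivative[OF continuous_on_slice[OF a_cont rect_slice_x[OF assms(1)]] assms(2)] .

lemma char_graph: "(\<lambda>s. (s, xs s)) ` {0..T} \<subseteq> rect T"
  using char_range by (auto simp: rect_def)

lemma char_cont: "continuous_on {0..T} xs"
  by (rule DERIV_within_imp_continuous_on) (rule char_ode)

lemma a_along_char_cont: "continuous_on {0..T} (\<lambda>s. a s (xs s))"
  using continuous_on_compose2[OF a_cont continuous_on_Pair[OF continuous_on_id char_cont] char_graph]
  by simp

definition log_stretch :: "real \<Rightarrow> real" where
  "log_stretch s = integral {0..s} (\<lambda>r. a r (xs r))"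

lemma log_stretch_deriv:
  "s \<in> {0..T} \<Longrightarrow> (log_stretch has_real_derivative a s (xs s)) (at s within {0..T})"
  unfolding log_stretch_def by (rule integral_has_real_derivative[OF a_along_char_cont])

lemma log_stretch_0 [simp]: "log_stretch 0 = 0"
  by (simp add: log_stretch_def)

lemma stretch_bound:
  obtains K where "K > 0" "\<And>s. s \<in> {0..T} \<Longrightarrow> exp (log_stretch s) \<le> K"
    "\<And>s. s \<in> {0..T} \<Longrightarrow> exp (- log_stretch s) \<le> K"
proof -
  have "continuous_on {0..T} log_stretch"
    by (rule DERIV_within_imp_continuous_on) (rule log_stretch_deriv)
  then obtain B where B: "\<And>s. s \<in> {0..T} \<Longrightarrow> norm (log_stretch s) \<le> B"
    using continuous_on_compact_bound[OF compact_Icc] by blast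
  show ?thesis
  proof (rule that[of "exp B"])
    fix s assume "s \<in> {0..T}"
    then show "exp (log_stretch s) \<le> exp B" "exp (- log_stretch s) \<le> exp B"
      using B by (auto simp: abs_le_iff)
  qed simp
qed

lemma char_at_pi_stays:
  assumes "s0 \<in> {0..T}" "xs s0 = pi" "s \<in> {0..T}"
  shows "xs s = pi"
proof -
  obtain M where M: "\<And>t x. t \<in> {0..T} \<Longrightarrow> x \<in> {-pi..pi} \<Longrightarrow> \<bar>a t x\<bar> \<le> M"
    using rect_bound[OF a_cont] by blast
  have nonneg: "pi - xs r \<ge> 0" if "r \<in> {0..T}" for r
    using char_range[OF that] by simp
  have deriv: "((\<lambda>s. pi - xs s) has_real_derivative - velocity a r (xs r)) (at r within {0..T})"
    if "r \<in> {0..T}" for r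
    using DERIV_diff[OF DERIV_const char_ode[OF that]] by simp
  have bound: "\<bar>- velocity a r (xs r)\<bar> \<le> M * (pi - xs r)" if r: "r \<in> {0..T}" for r
  proof -
    have "norm (a r z) \<le> M" if "z \<in> {-pi..pi}" for z
      using M[OF r that] by simp
    from field_differentiable_bound[OF convex_real_interval(5) velocity_deriv[OF r] this _ char_range[OF r]]
    have "norm (velocity a r pi - velocity a r (xs r)) \<le> M * norm (pi - xs r)"
      using pi_ge_zero by simp
    then show ?thesis
      using mean_zero[OF r] char_range[OF r] by simp
  qed
  have "pi - xs s = 0"
    by (rule gronwall_vanishing[where d = "\<lambda>s. pi - xs s", OF nonneg deriv bound assms(1) _ assms(3)])
      (simp_all add: assms(2))
  then show ?thesis by simp
qed

lemma char_at_pi_or_below: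
  obtains "\<And>s. s \<in> {0..T} \<Longrightarrow> xs s = pi"
    | m where "m > 0" "\<And>s. s \<in> {0..T} \<Longrightarrow> xs s \<le> pi - m"
proof (cases "\<exists>s0\<in>{0..T}. xs s0 = pi")
  case True
  then obtain s0 where s0: "s0 \<in> {0..T}" "xs s0 = pi"
    by blast
  have "xs s = pi" if "s \<in> {0..T}" for s
    using char_at_pi_stays[OF s0 that] .
  then show ?thesis
    by (rule that(1))
next
  case False
  have "{0..T} \<noteq> {}"
    using T_pos by simp
  from continuous_attains_sup[OF compact_Icc this char_cont]
  obtain sm where sm: "sm \<in> {0..T}" and max: "\<forall>s\<in>{0..T}. xs s \<le> xs sm"
    by blast
  have "xs sm \<noteq> pi"
    using False sm by blast
  then have "pi - xs sm > 0"
    using char_range[OF sm] by simp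
  moreover have "xs s \<le> pi - (pi - xs sm)" if "s \<in> {0..T}" for s
    using max that by simp
  ultimately show ?thesis
    by (rule that(2))
qed

definition perturbed :: "real \<Rightarrow> real \<Rightarrow> real" where
  "perturbed h s = xs s + h * exp (log_stretch s)"

lemma perturbed_0: "perturbed 0 s = xs s"
  by (simp add: perturbed_def)

lemma perturbed_inside_for_one_sign:
  obtains \<sigma> h0 where "\<bar>\<sigma>\<bar> = 1" "h0 > 0"
    "\<And>k s. 0 < k \<Longrightarrow> k < h0 \<Longrightarrow> s \<in> {0..T} \<Longrightarrow> perturbed (\<sigma> * k) s \<in> {-pi..pi}"
proof -
  obtain K where "K > 0" and K: "\<And>s. s \<in> {0..T} \<Longrightarrow> exp (log_stretch s) \<le> K"
    and "\<And>s. s \<in> {0..T} \<Longrightarrow> exp (- log_stretch s) \<le> K"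
    using stretch_bound by metis
  have small: "0 \<le> k * exp (log_stretch s) \<and> k * exp (log_stretch s) < m"
    if "0 < k" "k < m / K" "s \<in> {0..T}" for k m s
  proof -
    have "k * exp (log_stretch s) \<le> k * K"
      using K[OF that(3)] that(1) by simp
    also have "\<dots> < m"
      using that(2) \<open>K > 0\<close> by (simp add: field_simps)
    finally show ?thesis
      using that(1) by simp
  qed
  from char_at_pi_or_below show ?thesis
  proof cases
    case 1
    show ?thesis
    proof (rule that[of "-1" "2 * pi / K"])
      fix k s assume k: "0 < k" "k < 2 * pi / K" and s: "s \<in> {0..T}"
      then show "perturbed (-1 * k) s \<in> {-pi..pi}"
        using small[OF k s] 1[OF s] by (simp add: perturbed_def)
    qed (use \<open>K > 0\<close> in simp_all)
  next
    case (2 m)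
    show ?thesis
    proof (rule that[of 1 "m / K"])
      fix k s assume k: "0 < k" "k < m / K" and s: "s \<in> {0..T}"
      show "perturbed (1 * k) s \<in> {-pi..pi}"
        unfolding perturbed_def atLeastAtMost_iff mult_1
        using small[OF k s] 2(2)[OF s] char_range[OF s] by auto
    qed (use \<open>K > 0\<close> \<open>m > 0\<close> in simp_all)
  qed
qed

lemma perturbed_deriv:
  assumes "s \<in> {0..T}"
  shows "(perturbed h has_real_derivative
    velocity a s (xs s) + h * (exp (log_stretch s) * a s (xs s))) (at s within {0..T})"
  unfolding perturbed_def
  using char_ode[OF assms] log_stretch_deriv[OF assms] by (auto intro!: derivative_eq_intros)

definition scaled_slope :: "real \<Rightarrow> real \<Rightarrow> real" where
  "scaled_slope h s = a_x s (perturbed h s) * exp (- log_stretch s)"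

text \<open>Both summands are o(h) uniformly in s: in the first, a_x s (perturbed h s) = O(h) because
  a_x vanishes on the characteristic; the second factor of the second is the error of the
  linearization of velocity at xs s.\<close>

definition scaled_slope_deriv :: "real \<Rightarrow> real \<Rightarrow> real" where
  "scaled_slope_deriv h s =
    ((a s (perturbed h s) - a s (xs s)) * a_x s (perturbed h s)
      + a_xx s (perturbed h s) * (velocity a s (xs s) + (perturbed h s - xs s) * a s (xs s)
                                   - velocity a s (perturbed h s)))
    * exp (- log_stretch s)"

lemma scaled_slope_has_derivative:
  assumes inside: "\<And>s. s \<in> {0..T} \<Longrightarrow> perturbed h s \<in> {-pi..pi}" and s: "s \<in> {0..T}"
  shows "(scaled_slope h has_real_derivative scaled_slope_deriv h s) (at s within {0..T})"
proof -
  have graph: "(\<lambda>s. (s, perturbed h s)) ` {0..T} \<subseteq> rect T"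
    using inside by (auto simp: rect_def)
  have "((\<lambda>s. a_x s (perturbed h s)) has_real_derivative a_xt s (perturbed h s)
      + a_xx s (perturbed h s) * (velocity a s (xs s) + h * (exp (log_stretch s) * a s (xs s))))
      (at s within {0..T})"
    by (rule has_partials_chain[OF a_x graph s perturbed_deriv[OF s]])
  moreover have "((\<lambda>s. exp (- log_stretch s)) has_real_derivative
      exp (- log_stretch s) * (- a s (xs s))) (at s within {0..T})"
    using log_stretch_deriv[OF s] by (auto intro!: derivative_eq_intros)
  ultimately have "(scaled_slope h has_real_derivative
      (a_xt s (perturbed h s)
        + a_xx s (perturbed h s) * (velocity a s (xs s) + h * (exp (log_stretch s) * a s (xs s))))
        * exp (- log_stretch s)
      + exp (- log_stretch s) * (- a s (xs s)) * a_x s (perturbed h s)) (at s within {0..T})"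
    unfolding scaled_slope_def by (rule DERIV_mult)
  moreover have "perturbed h s - xs s = h * exp (log_stretch s)"
    by (simp add: perturbed_def)
  ultimately show ?thesis
    unfolding scaled_slope_deriv_def transport[OF s inside[OF s]]
    by (simp add: algebra_simps)
qed

lemma a_x_along_char:
  assumes "s \<in> {0..T}"
  shows "a_x s (xs s) = 0"
proof -
  have inside: "perturbed 0 t \<in> {-pi..pi}" if "t \<in> {0..T}" for t
    using char_range[OF that] by (simp only: perturbed_0)
  have deriv0: "(scaled_slope 0 has_real_derivative 0) (at r within {0..T})" if r: "r \<in> {0..T}" for r
  proof -
    have "(scaled_slope 0 has_real_derivative scaled_slope_deriv 0 r) (at r within {0..T})"
      by (rule scaled_slope_has_derivative[OF inside r])
    moreover have "scaled_slope_deriv 0 r = 0"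
      by (simp add: scaled_slope_deriv_def perturbed_def)
    ultimately show ?thesis
      by simp
  qed
  have "\<exists>c. \<forall>r\<in>{0..T}. scaled_slope 0 r = c"
    by (rule has_field_derivative_zero_constant[OF convex_real_interval(5) deriv0])
  then obtain c where "\<forall>r\<in>{0..T}. scaled_slope 0 r = c"
    by blast
  then have "scaled_slope 0 s = scaled_slope 0 0"
    using assms T_pos by simp
  then show ?thesis
    using crit char_init by (simp add: scaled_slope_def perturbed_def)
qed

lemma a_uniformly_close_on_segments:
  assumes "\<epsilon> > 0"
  obtains \<delta> where "\<delta> > 0" "\<And>s y Y z. s \<in> {0..T} \<Longrightarrow> y \<in> {-pi..pi} \<Longrightarrow> Y \<in> {-pi..pi} \<Longrightarrow>
    \<bar>Y - y\<bar> < \<delta> \<Longrightarrow> z \<in> closed_segment y Y \<Longrightarrow> \<bar>a s z - a s y\<bar> \<le> \<epsilon>"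
proof -
  have "uniformly_continuous_on (rect T) (\<lambda>q. a (fst q) (snd q))"
    by (rule compact_uniformly_continuous[OF a_cont compact_rect])
  then obtain \<delta> where "\<delta> > 0" and \<delta>: "\<And>p q. p \<in> rect T \<Longrightarrow> q \<in> rect T \<Longrightarrow> dist q p < \<delta> \<Longrightarrow>
      dist (a (fst q) (snd q)) (a (fst p) (snd p)) < \<epsilon>"
    unfolding uniformly_continuous_on_def using assms by metis
  show ?thesis
  proof (rule that[OF \<open>\<delta> > 0\<close>])
    fix s y Y z assume s: "s \<in> {0..T}" and y: "y \<in> {-pi..pi}" and Y: "Y \<in> {-pi..pi}"
      and "\<bar>Y - y\<bar> < \<delta>" and z: "z \<in> closed_segment y Y"
    have "z \<in> {-pi..pi}"
      using closed_segment_subset[OF y Y] z by auto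
    moreover have "\<bar>z - y\<bar> < \<delta>"
      using dist_in_closed_segment[OF z] \<open>\<bar>Y - y\<bar> < \<delta>\<close> by (simp add: dist_real_def abs_minus_commute)
    ultimately show "\<bar>a s z - a s y\<bar> \<le> \<epsilon>"
      using \<delta>[of "(s, y)" "(s, z)"] s y by (simp add: rect_def dist_Pair_Pair dist_real_def)
  qed
qed

lemma scaled_slope_deriv_bound:
  assumes s: "s \<in> {0..T}" and inside: "perturbed h s \<in> {-pi..pi}"
    and close: "\<And>z. z \<in> closed_segment (xs s) (perturbed h s) \<Longrightarrow> \<bar>a s z - a s (xs s)\<bar> \<le> \<epsilon>"
    and M: "\<And>x. x \<in> {-pi..pi} \<Longrightarrow> \<bar>a_xx s x\<bar> \<le> M"
    and K: "exp (- log_stretch s) \<le> K"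
  shows "\<bar>scaled_slope_deriv h s\<bar> \<le> 2 * \<epsilon> * M * \<bar>perturbed h s - xs s\<bar> * K"
proof -
  define y Y where "y = xs s" and "Y = perturbed h s"
  have y: "y \<in> {-pi..pi}" and Y: "Y \<in> {-pi..pi}"
    using char_range[OF s] inside by (simp_all add: y_def Y_def)
  have "\<epsilon> \<ge> 0" and "M \<ge> 0"
    using close[of y] M[OF y] by (auto simp: y_def)
  have "norm (a_x s Y - a_x s y) \<le> M * norm (Y - y)"
    using field_differentiable_bound[OF convex_real_interval(5) has_partials_x[OF a_x rect_slice_x[OF s]]]
      M Y y by simp
  then have slope: "\<bar>a_x s Y\<bar> \<le> M * \<bar>Y - y\<bar>"
    using a_x_along_char[OF s] by (simp add: y_def)
  have "\<bar>a s Y - a s y\<bar> \<le> \<epsilon>"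
    using close[of Y] by (simp add: y_def Y_def)
  then have first: "\<bar>(a s Y - a s y) * a_x s Y\<bar> \<le> \<epsilon> * (M * \<bar>Y - y\<bar>)"
    unfolding abs_mult using slope by (intro mult_mono) auto
  have "\<bar>velocity a s Y - velocity a s y - (Y - y) * a s y\<bar> \<le> \<epsilon> * \<bar>Y - y\<bar>"
    by (rule integral_linearization_bound[OF continuous_on_slice[OF a_cont rect_slice_x[OF s]] y Y])
      (use close in \<open>simp add: y_def Y_def\<close>)
  then have "\<bar>velocity a s y + (Y - y) * a s y - velocity a s Y\<bar> \<le> \<epsilon> * \<bar>Y - y\<bar>"
    by (simp add: abs_minus_commute algebra_simps)
  then have second: "\<bar>a_xx s Y * (velocity a s y + (Y - y) * a s y - velocity a s Y)\<bar>
      \<le> M * (\<epsilon> * \<bar>Y - y\<bar>)"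
    unfolding abs_mult using M[OF Y] \<open>M \<ge> 0\<close> by (intro mult_mono) auto
  have "\<bar>scaled_slope_deriv h s\<bar> \<le> (\<epsilon> * (M * \<bar>Y - y\<bar>) + M * (\<epsilon> * \<bar>Y - y\<bar>)) * K"
    unfolding scaled_slope_deriv_def y_def[symmetric] Y_def[symmetric] abs_mult
    using first second K \<open>\<epsilon> \<ge> 0\<close> \<open>M \<ge> 0\<close>
    by (intro mult_mono add_mono[THEN abs_triangle_ineq[THEN order_trans]]) auto
  then show ?thesis
    by (simp add: y_def Y_def algebra_simps)
qed

lemma scaled_slope_deriv_small:
  assumes "e > 0"
  obtains \<delta> where "\<delta> > 0" "\<And>h s. \<bar>h\<bar> < \<delta> \<Longrightarrow> s \<in> {0..T} \<Longrightarrow> perturbed h s \<in> {-pi..pi} \<Longrightarrow>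
    \<bar>scaled_slope_deriv h s\<bar> \<le> e * \<bar>h\<bar>"
proof -
  obtain K where "K > 0" and K: "\<And>s. s \<in> {0..T} \<Longrightarrow> exp (log_stretch s) \<le> K"
    and K': "\<And>s. s \<in> {0..T} \<Longrightarrow> exp (- log_stretch s) \<le> K"
    using stretch_bound by metis
  obtain M where "M \<ge> 0" and M: "\<And>t x. t \<in> {0..T} \<Longrightarrow> x \<in> {-pi..pi} \<Longrightarrow> \<bar>a_xx t x\<bar> \<le> M"
    using rect_bound[OF a_xx_cont] by metis
  define \<epsilon> where "\<epsilon> = e / (2 * (M + 1) * K * K)"
  have "\<epsilon> > 0"
    using \<open>e > 0\<close> \<open>M \<ge> 0\<close> \<open>K > 0\<close> by (simp add: \<epsilon>_def)
  obtain \<delta> where "\<delta> > 0" and \<delta>: "\<And>s y Y z. s \<in> {0..T} \<Longrightarrow> y \<in> {-pi..pi} \<Longrightarrow> Y \<in> {-pi..pi} \<Longrightarrow>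
      \<bar>Y - y\<bar> < \<delta> \<Longrightarrow> z \<in> closed_segment y Y \<Longrightarrow> \<bar>a s z - a s y\<bar> \<le> \<epsilon>"
    using a_uniformly_close_on_segments[OF \<open>\<epsilon> > 0\<close>] by metis
  show ?thesis
  proof (rule that[of "\<delta> / K"])
    show "\<delta> / K > 0"
      using \<open>\<delta> > 0\<close> \<open>K > 0\<close> by simp
    fix h s assume h: "\<bar>h\<bar> < \<delta> / K" and s: "s \<in> {0..T}" and inside: "perturbed h s \<in> {-pi..pi}"
    have "\<bar>perturbed h s - xs s\<bar> = \<bar>h\<bar> * exp (log_stretch s)"
      by (simp add: perturbed_def abs_mult)
    also have "\<dots> \<le> \<bar>h\<bar> * K"
      using K[OF s] by (simp add: mult_left_mono)
    finally have dist_le: "\<bar>perturbed h s - xs s\<bar> \<le> \<bar>h\<bar> * K" .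
    also have "\<dots> < \<delta>"
      using h \<open>K > 0\<close> by (simp add: field_simps)
    finally have "\<bar>perturbed h s - xs s\<bar> < \<delta>" .
    have close: "\<bar>a s z - a s (xs s)\<bar> \<le> \<epsilon>" if "z \<in> closed_segment (xs s) (perturbed h s)" for z
      using \<delta>[OF s char_range[OF s] inside \<open>\<bar>perturbed h s - xs s\<bar> < \<delta>\<close> that] .
    have M1: "\<bar>a_xx s x\<bar> \<le> M + 1" if "x \<in> {-pi..pi}" for x
      using M[OF s that] by linarith
    have "\<bar>scaled_slope_deriv h s\<bar> \<le> 2 * \<epsilon> * (M + 1) * \<bar>perturbed h s - xs s\<bar> * K"
      by (rule scaled_slope_deriv_bound[OF s inside close M1 K'[OF s]])
    also have "\<dots> \<le> 2 * \<epsilon> * (M + 1) * (\<bar>h\<bar> * K) * K"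
      using dist_le \<open>\<epsilon> > 0\<close> \<open>M \<ge> 0\<close> \<open>K > 0\<close> by (intro mult_right_mono mult_left_mono) auto
    also have "\<dots> = (\<epsilon> * (2 * (M + 1) * K * K)) * \<bar>h\<bar>"
      by (simp add: algebra_simps)
    also have "\<dots> = e * \<bar>h\<bar>"
      using \<open>M \<ge> 0\<close> \<open>K > 0\<close> by (simp add: \<epsilon>_def)
    finally show "\<bar>scaled_slope_deriv h s\<bar> \<le> e * \<bar>h\<bar>" .
  qed
qed

lemma scaled_slope_increment_small:
  assumes "e > 0"
  obtains \<delta> where "\<delta> > 0" "\<And>h t. \<bar>h\<bar> < \<delta> \<Longrightarrow> (\<And>s. s \<in> {0..T} \<Longrightarrow> perturbed h s \<in> {-pi..pi}) \<Longrightarrow>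
    t \<in> {0..T} \<Longrightarrow> \<bar>scaled_slope h t - scaled_slope h 0\<bar> \<le> e * \<bar>h\<bar>"
proof -
  have "e / T > 0" and "0 \<in> {0..T}"
    using assms T_pos by simp_all
  then obtain \<delta> where "\<delta> > 0" and \<delta>: "\<And>h s. \<bar>h\<bar> < \<delta> \<Longrightarrow> s \<in> {0..T} \<Longrightarrow>
      perturbed h s \<in> {-pi..pi} \<Longrightarrow> \<bar>scaled_slope_deriv h s\<bar> \<le> e / T * \<bar>h\<bar>"
    using scaled_slope_deriv_small by metis
  show ?thesis
  proof (rule that[OF \<open>\<delta> > 0\<close>])
    fix h t assume h: "\<bar>h\<bar> < \<delta>" and inside: "\<And>s. s \<in> {0..T} \<Longrightarrow> perturbed h s \<in> {-pi..pi}"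
      and t: "t \<in> {0..T}"
    have D: "norm (scaled_slope_deriv h s) \<le> e / T * \<bar>h\<bar>" if "s \<in> {0..T}" for s
      using \<delta>[OF h that inside[OF that]] by simp
    have "norm (scaled_slope h t - scaled_slope h 0) \<le> e / T * \<bar>h\<bar> * norm (t - 0)"
      using field_differentiable_bound[OF convex_real_interval(5) scaled_slope_has_derivative[OF inside]
          D t \<open>0 \<in> {0..T}\<close>] .
    also have "\<dots> \<le> e / T * \<bar>h\<bar> * T"
      using t assms T_pos by (intro mult_left_mono) simp_all
    finally show "\<bar>scaled_slope h t - scaled_slope h 0\<bar> \<le> e * \<bar>h\<bar>"
      using T_pos by simp
  qed
qed

lemma scaled_slope_quotient_tendsto:
  assumes "\<bar>\<sigma>\<bar> = 1" "h0 > 0"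
    and inside: "\<And>k. 0 < k \<Longrightarrow> k < h0 \<Longrightarrow> perturbed (\<sigma> * k) r \<in> {-pi..pi}"
    and r: "r \<in> {0..T}"
  shows "((\<lambda>k. scaled_slope (\<sigma> * k) r / (\<sigma> * k)) \<longlongrightarrow> a_xx r (xs r)) (at_right 0)"
proof -
  have quotient: "((\<lambda>y. (a_x r y - a_x r (xs r)) / (y - xs r)) \<longlongrightarrow> a_xx r (xs r))
      (at (xs r) within {-pi..pi})"
    using has_partials_x[OF a_x rect_slice_x[OF r] char_range[OF r]]
    by (simp add: has_field_derivative_iff)
  have "((\<lambda>k. perturbed (\<sigma> * k) r) \<longlongrightarrow> perturbed (\<sigma> * 0) r) (at_right 0)"
    unfolding perturbed_def by (intro tendsto_intros)
  then have "((\<lambda>k. perturbed (\<sigma> * k) r) \<longlongrightarrow> xs r) (at_right 0)"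
    by (simp add: perturbed_0)
  moreover have "\<forall>\<^sub>F k in at_right 0. perturbed (\<sigma> * k) r \<in> {-pi..pi} \<and> perturbed (\<sigma> * k) r \<noteq> xs r"
    using eventually_at_right_real[OF \<open>h0 > 0\<close>]
  proof eventually_elim
    case (elim k)
    then show ?case
      using inside[of k] assms(1) by (auto simp: perturbed_def)
  qed
  ultimately have "filterlim (\<lambda>k. perturbed (\<sigma> * k) r) (at (xs r) within {-pi..pi}) (at_right 0)"
    unfolding filterlim_at by blast
  from filterlim_compose[OF quotient this]
  have "((\<lambda>k. (a_x r (perturbed (\<sigma> * k) r) - a_x r (xs r)) / (perturbed (\<sigma> * k) r - xs r))
      \<longlongrightarrow> a_xx r (xs r)) (at_right 0)" .
  moreover have "\<forall>\<^sub>F k in at_right 0.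
      (a_x r (perturbed (\<sigma> * k) r) - a_x r (xs r)) / (perturbed (\<sigma> * k) r - xs r)
        = scaled_slope (\<sigma> * k) r / (\<sigma> * k)"
    using eventually_at_right_real[OF \<open>h0 > 0\<close>]
  proof eventually_elim
    case (elim k)
    then have "\<sigma> * k \<noteq> 0"
      using assms(1) by auto
    then show ?case
      using a_x_along_char[OF r]
      by (simp add: scaled_slope_def perturbed_def exp_minus divide_inverse mult_ac)
  qed
  ultimately show ?thesis
    by (rule Lim_transform_eventually)
qed

lemma scaled_slope_increment_quotient_tendsto:
  assumes "\<bar>\<sigma>\<bar> = 1" "h0 > 0"
    and inside: "\<And>k s. 0 < k \<Longrightarrow> k < h0 \<Longrightarrow> s \<in> {0..T} \<Longrightarrow> perturbed (\<sigma> * k) s \<in> {-pi..pi}"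
    and t: "t \<in> {0..T}"
  shows "((\<lambda>k. (scaled_slope (\<sigma> * k) t - scaled_slope (\<sigma> * k) 0) / (\<sigma> * k)) \<longlongrightarrow> 0) (at_right 0)"
  unfolding tendsto_iff
proof (intro allI impI)
  fix e :: real assume "e > 0"
  then have "e / 2 > 0"
    by simp
  then obtain \<delta> where "\<delta> > 0" and \<delta>: "\<And>h t. \<bar>h\<bar> < \<delta> \<Longrightarrow> (\<And>s. s \<in> {0..T} \<Longrightarrow> perturbed h s \<in> {-pi..pi}) \<Longrightarrow>
      t \<in> {0..T} \<Longrightarrow> \<bar>scaled_slope h t - scaled_slope h 0\<bar> \<le> e / 2 * \<bar>h\<bar>"
    using scaled_slope_increment_small by metis
  have "min h0 \<delta> > 0"
    using \<open>h0 > 0\<close> \<open>\<delta> > 0\<close> by simp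
  from eventually_at_right_real[OF this]
  show "\<forall>\<^sub>F k in at_right 0. dist ((scaled_slope (\<sigma> * k) t - scaled_slope (\<sigma> * k) 0) / (\<sigma> * k)) 0 < e"
  proof eventually_elim
    case (elim k)
    then have "\<bar>\<sigma> * k\<bar> = k" "k > 0"
      using assms(1) by (auto simp: abs_mult)
    then have "\<bar>scaled_slope (\<sigma> * k) t - scaled_slope (\<sigma> * k) 0\<bar> \<le> e / 2 * k"
      using \<delta>[of "\<sigma> * k", OF _ inside t] elim by auto
    then have "\<bar>(scaled_slope (\<sigma> * k) t - scaled_slope (\<sigma> * k) 0) / (\<sigma> * k)\<bar> \<le> e / 2"
      using \<open>\<bar>\<sigma> * k\<bar> = k\<close> \<open>k > 0\<close> by (simp add: abs_divide divide_le_eq)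
    then show ?case
      using \<open>e > 0\<close> by (simp only: dist_real_def diff_zero)
  qed
qed

lemma a_xx_along_char:
  assumes t: "t \<in> {0..T}"
  shows "a_xx t (xs t) = a_xx 0 x0"
proof -
  obtain \<sigma> h0 where \<sigma>: "\<bar>\<sigma>\<bar> = 1" and "h0 > 0"
    and inside: "\<And>k s. 0 < k \<Longrightarrow> k < h0 \<Longrightarrow> s \<in> {0..T} \<Longrightarrow> perturbed (\<sigma> * k) s \<in> {-pi..pi}"
    using perturbed_inside_for_one_sign by metis
  have "0 \<in> {0..T}"
    using T_pos by simp
  have "((\<lambda>k. (scaled_slope (\<sigma> * k) t - scaled_slope (\<sigma> * k) 0) / (\<sigma> * k))
      \<longlongrightarrow> a_xx t (xs t) - a_xx 0 x0) (at_right 0)"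
    using tendsto_diff[OF scaled_slope_quotient_tendsto[OF \<sigma> \<open>h0 > 0\<close> inside[OF _ _ t] t]
        scaled_slope_quotient_tendsto[OF \<sigma> \<open>h0 > 0\<close> inside[OF _ _ \<open>0 \<in> {0..T}\<close>] \<open>0 \<in> {0..T}\<close>]]
    by (simp add: diff_divide_distrib char_init)
  moreover note scaled_slope_increment_quotient_tendsto[OF \<sigma> \<open>h0 > 0\<close> inside t]
  ultimately have "a_xx t (xs t) - a_xx 0 x0 = 0"
    by (rule tendsto_unique[OF trivial_limit_at_right_real])
  then show ?thesis
    by simp
qed

end

theorem lemma2p5:
  fixes a a_t a_x a_xx :: "real \<Rightarrow> real \<Rightarrow> real"
    and T x0 :: real and xs :: "real \<Rightarrow> real"
  assumes T: "T > 0"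
    and C2: "C2_on a a_t a_x a_xx (rect T)"
    and pde: "\<forall>t\<in>{0..T}. \<forall>x\<in>{-pi..pi}.
        a_t t x + integral {-pi..x} (a t) * a_x t x - (a t x)^2
          + (1/pi) * integral {-pi..pi} (\<lambda>y. (a t y)^2) = 0"
    and mean0: "\<forall>t\<in>{0..T}. integral {-pi..pi} (a t) = 0"
    and x0: "x0 \<in> {-pi..pi}"
    and crit: "a_x 0 x0 = 0"
    and char_range: "\<forall>t\<in>{0..T}. xs t \<in> {-pi..pi}"
    and char_init: "xs 0 = x0"
    and char_ode: "\<forall>t\<in>{0..T}.
        (xs has_real_derivative integral {-pi..xs t} (a t)) (at t within {0..T})"
  shows "\<forall>t\<in>{0..T}. a_xx t (xs t) = a_xx 0 x0"
proof -
  obtain a_tt a_tx a_xt where a: "has_partials a a_t a_x (rect T)"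
    and a_t: "has_partials a_t a_tt a_tx (rect T)" and a_x: "has_partials a_x a_xt a_xx (rect T)"
    and cont: "continuous_on (rect T) (\<lambda>q. a_tx (fst q) (snd q))"
      "continuous_on (rect T) (\<lambda>q. a_xt (fst q) (snd q))"
      "continuous_on (rect T) (\<lambda>q. a_xx (fst q) (snd q))"
    using C2_onE[OF C2] by metis
  have pde': "a_t t x + velocity a t x * a_x t x - (a t x)^2
      + (1/pi) * integral {-pi..pi} (\<lambda>y. (a t y)^2) = 0" if "t \<in> {0..T}" "x \<in> {-pi..pi}" for t x
    using pde that by blast
  interpret critical_characteristic a a_x a_xt a_xx T x0 xs
  proof
    show "a_xt t x = a t x * a_x t x - velocity a t x * a_xx t x"
      if "t \<in> {0..T}" "x \<in> {-pi..pi}" for t x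
      by (rule transport_of_a_x[OF T a a_t a_x cont(1,2) pde' that])
  qed (use T has_partials_continuous_on[OF a] a_x cont(3) mean0 crit char_range char_init char_ode
    in simp_all)
  show ?thesis
    using a_xx_along_char by blast
qed

end
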